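(* Let $1\le p<\infty$ and let $d_{w,p}$ be a Lorentz sequence space. Let $Y$ be a complemented closed subspace of $d_{w,p}$ isomorphic to $\ell_p$, let $P\in L(d_{w,p})$ be a projection with range $Y$, and let $U\colon Y\to\ell_p$ be an isomorphism onto $\ell_p$. If $T=jUP$, then $J_T=J^j$.
   Context: Let $1\le p<\infty$ and let $w=(w_n)$ be a real sequence with $w_1=1$, $w_n\downarrow 0$ and $\sum_n w_n=\infty$. The Lorentz sequence space $d_{w,p}$ is the Banach space of all $x=(x_n)\in c_0$ with $\|x\|_{d_{w,p}}=\big(\sum_{n}w_n (x^*_n)^p\big)^{1/p}<\infty$, where $(x^*_n)$ is the non-increasing rearrangement of $(|x_n|)$. Let $(e_n)$ be the unit vector basis of $d_{w,p}$ and $(f_n)$ that of $\ell_p$; $j\colon\ell_p\to d_{w,p}$ is the formal identity, $j(f_n)=e_n$. $J^j$ is the set of operators $S\in L(d_{w,p})$ of the form $S=AjB$ with $A\in L(d_{w,p})$, $B\in L(d_{w,p},\ell_p)$. $J_T=\{\sum_{i=1}^n A_iTB_i: n\in\mathbb N, A_i,B_i\in L(d_{w,p})\}$ is the ideal generated by $T$. *)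

theory Defs
  imports Complex_Main
begin

text \<open>Sequences are functions nat => real, indexed from 0 (so the paper's w_1 is w 0).\<close>

definition add_seq :: "(nat \<Rightarrow> real) \<Rightarrow> (nat \<Rightarrow> real) \<Rightarrow> nat \<Rightarrow> real" where
  "add_seq x y = (\<lambda>n. x n + y n)"

definition scale_seq :: "real \<Rightarrow> (nat \<Rightarrow> real) \<Rightarrow> nat \<Rightarrow> real" where
  "scale_seq c x = (\<lambda>n. c * x n)"

definition diff_seq :: "(nat \<Rightarrow> real) \<Rightarrow> (nat \<Rightarrow> real) \<Rightarrow> nat \<Rightarrow> real" where
  "diff_seq x y = (\<lambda>n. x n - y n)"

text \<open>Non-increasing rearrangement of (|x n|) (0-indexed), via the distribution function.\<close>
definition xstar :: "(nat \<Rightarrow> real) \<Rightarrow> nat \<Rightarrow> real" where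
  "xstar x n = Inf {t. 0 \<le> t \<and> finite {k. t < \<bar>x k\<bar>} \<and> card {k. t < \<bar>x k\<bar>} \<le> n}"

definition weight_seq :: "(nat \<Rightarrow> real) \<Rightarrow> bool" where
  "weight_seq w \<longleftrightarrow> w 0 = 1 \<and> antimono w \<and> w \<longlonglongrightarrow> 0 \<and> \<not> summable w"

definition lorentz_space :: "(nat \<Rightarrow> real) \<Rightarrow> real \<Rightarrow> (nat \<Rightarrow> real) set" where
  "lorentz_space w p = {x. x \<longlonglongrightarrow> 0 \<and> summable (\<lambda>n. w n * xstar x n powr p)}"

definition lorentz_norm :: "(nat \<Rightarrow> real) \<Rightarrow> real \<Rightarrow> (nat \<Rightarrow> real) \<Rightarrow> real" where
  "lorentz_norm w p x = (\<Sum>n. w n * xstar x n powr p) powr (1 / p)"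

definition lp_space :: "real \<Rightarrow> (nat \<Rightarrow> real) set" where
  "lp_space p = {x. summable (\<lambda>n. \<bar>x n\<bar> powr p)}"

definition lp_norm :: "real \<Rightarrow> (nat \<Rightarrow> real) \<Rightarrow> real" where
  "lp_norm p x = (\<Sum>n. \<bar>x n\<bar> powr p) powr (1 / p)"

definition linear_subspace :: "(nat \<Rightarrow> real) set \<Rightarrow> bool" where
  "linear_subspace X \<longleftrightarrow> (\<lambda>n. 0) \<in> X \<and>
     (\<forall>x\<in>X. \<forall>y\<in>X. add_seq x y \<in> X) \<and> (\<forall>c. \<forall>x\<in>X. scale_seq c x \<in> X)"

definition closed_in_norm :: "((nat \<Rightarrow> real) \<Rightarrow> real) \<Rightarrow> (nat \<Rightarrow> real) set \<Rightarrow> (nat \<Rightarrow> real) set \<Rightarrow> bool" where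
  "closed_in_norm N X Y \<longleftrightarrow>
     (\<forall>s x. (\<forall>k. s k \<in> Y) \<and> x \<in> X \<and> (\<lambda>k. N (diff_seq (s k) x)) \<longlonglongrightarrow> 0 \<longrightarrow> x \<in> Y)"

definition linear_on :: "(nat \<Rightarrow> real) set \<Rightarrow> ((nat \<Rightarrow> real) \<Rightarrow> (nat \<Rightarrow> real)) \<Rightarrow> bool" where
  "linear_on X T \<longleftrightarrow> (\<forall>x\<in>X. \<forall>y\<in>X. T (add_seq x y) = add_seq (T x) (T y)) \<and>
     (\<forall>c. \<forall>x\<in>X. T (scale_seq c x) = scale_seq c (T x))"

text \<open>Bounded linear operator from (X, N1) into (Y, N2); operators are identified
  when they agree on X.\<close>
definition bounded_op :: "((nat \<Rightarrow> real) \<Rightarrow> real) \<Rightarrow> (nat \<Rightarrow> real) set \<Rightarrow>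
    ((nat \<Rightarrow> real) \<Rightarrow> real) \<Rightarrow> (nat \<Rightarrow> real) set \<Rightarrow> ((nat \<Rightarrow> real) \<Rightarrow> (nat \<Rightarrow> real)) \<Rightarrow> bool" where
  "bounded_op N1 X N2 Y T \<longleftrightarrow> (\<forall>x\<in>X. T x \<in> Y) \<and> linear_on X T \<and>
     (\<exists>C. \<forall>x\<in>X. N2 (T x) \<le> C * N1 x)"

definition Ld :: "(nat \<Rightarrow> real) \<Rightarrow> real \<Rightarrow> ((nat \<Rightarrow> real) \<Rightarrow> (nat \<Rightarrow> real)) \<Rightarrow> bool" where
  "Ld w p T \<longleftrightarrow> bounded_op (lorentz_norm w p) (lorentz_space w p) (lorentz_norm w p) (lorentz_space w p) T"

text \<open>Membership in J^j: S = A j B with A in L(d), B in L(d, l_p); j is the formal identity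
  l_p -> d, i.e. the identity on sequences.\<close>
definition in_Jj :: "(nat \<Rightarrow> real) \<Rightarrow> real \<Rightarrow> ((nat \<Rightarrow> real) \<Rightarrow> (nat \<Rightarrow> real)) \<Rightarrow> bool" where
  "in_Jj w p S \<longleftrightarrow> (\<exists>A B. Ld w p A \<and>
     bounded_op (lorentz_norm w p) (lorentz_space w p) (lp_norm p) (lp_space p) B \<and>
     (\<forall>x\<in>lorentz_space w p. S x = A (B x)))"

definition in_JT :: "(nat \<Rightarrow> real) \<Rightarrow> real \<Rightarrow> ((nat \<Rightarrow> real) \<Rightarrow> (nat \<Rightarrow> real)) \<Rightarrow>
    ((nat \<Rightarrow> real) \<Rightarrow> (nat \<Rightarrow> real)) \<Rightarrow> bool" where
  "in_JT w p T S \<longleftrightarrow> (\<exists>(n::nat) A B. (\<forall>i<n. Ld w p (A i) \<and> Ld w p (B i)) \<and>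
     (\<forall>x\<in>lorentz_space w p. S x = (\<lambda>k. \<Sum>i<n. A i (T (B i x)) k)))"

end

theory Submission
  imports Defs
begin

text \<open>An operator \<open>S = (\<Sum>i<n. A\<^sub>i T B\<^sub>i)\<close> with \<open>T = j U P\<close> factors through a single
  copy of \<open>\<ell>\<^sub>p\<close>: interleave the \<open>\<ell>\<^sub>p\<close>-valued operators \<open>u\<^sub>i = U P B\<^sub>i\<close> into one operator
  \<open>B x = (u\<^sub>0 x 0, ..., u\<^sub>n\<^sub>-\<^sub>1 x 0, u\<^sub>0 x 1, ...)\<close> and recover them by
  \<open>A z = (\<Sum>i<n. A\<^sub>i (\<lambda>j. z (n j + i)))\<close>, so that \<open>S = A j B\<close>.
  This \<open>A\<close> is bounded on \<open>d\<^sub>w\<^sub>,\<^sub>p\<close> because passing to a subsequence does not increase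
  the decreasing rearrangement, and because \<open>(x + y)\<^sup>*\<^sub>2\<^sub>m \<le> x\<^sup>*\<^sub>m + y\<^sup>*\<^sub>m\<close> together with the
  monotonicity of the weights makes the \<open>p\<close>-th power of the norm quasi-additive.
  Conversely \<open>A j B = A T (U\<^sup>-\<^sup>1 B)\<close>, since \<open>P\<close> fixes the range \<open>Y\<close> of \<open>U\<^sup>-\<^sup>1\<close>.\<close>

definition exceed_set :: "(nat \<Rightarrow> real) \<Rightarrow> real \<Rightarrow> nat set" where
  "exceed_set x t = {k. t < \<bar>x k\<bar>}"

definition xstar_levels :: "(nat \<Rightarrow> real) \<Rightarrow> nat \<Rightarrow> real set" where
  "xstar_levels x n = {t. 0 \<le> t \<and> finite (exceed_set x t) \<and> card (exceed_set x t) \<le> n}"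

lemma xstar_eq_Inf_levels: "xstar x n = Inf (xstar_levels x n)"
  unfolding xstar_def xstar_levels_def exceed_set_def by simp

lemma bdd_below_xstar_levels: "bdd_below (xstar_levels x n)"
  unfolding xstar_levels_def by (rule bdd_belowI[of _ 0]) auto

lemma xstar_levels_nonempty:
  assumes "x \<longlonglongrightarrow> 0" shows "xstar_levels x n \<noteq> {}"
proof -
  obtain M where M: "M > 0" "\<And>k. norm (x k) \<le> M"
    using assms convergent_imp_Bseq convergentI by (metis BseqE)
  then have "exceed_set x M = {}" by (auto simp: exceed_set_def not_less)
  with M have "M \<in> xstar_levels x n" by (simp add: xstar_levels_def)
  then show ?thesis by blast
qed

lemma xstar_nonneg:
  assumes "x \<longlonglongrightarrow> 0" shows "0 \<le> xstar x n"
  unfolding xstar_eq_Inf_levels using xstar_levels_nonempty[OF assms]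
  by (intro cInf_greatest) (auto simp: xstar_levels_def)

lemma xstar_levels_upward_closed:
  assumes "t \<in> xstar_levels x n" "t \<le> s" shows "s \<in> xstar_levels x n"
proof -
  have "exceed_set x s \<subseteq> exceed_set x t" using assms(2) by (auto simp: exceed_set_def)
  with assms show ?thesis unfolding xstar_levels_def
    by (auto intro: finite_subset card_mono order_trans)
qed

lemma xstar_less_imp_level:
  assumes "x \<longlonglongrightarrow> 0" "xstar x n < s" shows "s \<in> xstar_levels x n"
proof -
  obtain t where "t \<in> xstar_levels x n" "t < s"
    using assms(2) cInf_less_iff[OF xstar_levels_nonempty[OF assms(1)] bdd_below_xstar_levels]
    unfolding xstar_eq_Inf_levels by blast
  then show ?thesis using xstar_levels_upward_closed by auto
qed

lemma xstar_le_if_levels_subset: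
  assumes "x \<longlonglongrightarrow> 0" "xstar_levels x n \<subseteq> xstar_levels y m"
  shows "xstar y m \<le> xstar x n"
  unfolding xstar_eq_Inf_levels
  by (rule cInf_superset_mono[OF xstar_levels_nonempty[OF assms(1)] bdd_below_xstar_levels assms(2)])

lemma xstar_antimono:
  assumes "x \<longlonglongrightarrow> 0" "n \<le> m" shows "xstar x m \<le> xstar x n"
  using assms by (intro xstar_le_if_levels_subset) (auto simp: xstar_levels_def)

lemma xstar_zero: "xstar (\<lambda>k. 0) n = 0"
proof -
  have "xstar_levels (\<lambda>k. 0) n = {0..}" by (auto simp: xstar_levels_def exceed_set_def)
  then show ?thesis by (simp add: xstar_eq_Inf_levels)
qed

lemma xstar_reindex_le:
  assumes "x \<longlonglongrightarrow> 0" "inj f" shows "xstar (x \<circ> f) n \<le> xstar x n"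
proof (rule xstar_le_if_levels_subset[OF assms(1)], rule subsetI)
  fix t assume t: "t \<in> xstar_levels x n"
  have sub: "f ` exceed_set (x \<circ> f) t \<subseteq> exceed_set x t" by (auto simp: exceed_set_def)
  have fin: "finite (exceed_set x t)" using t by (simp add: xstar_levels_def)
  have inj_on: "inj_on f (exceed_set (x \<circ> f) t)" using assms(2) inj_on_subset by blast
  have "finite (exceed_set (x \<circ> f) t)"
    using finite_imageD[OF finite_subset[OF sub fin] inj_on] .
  moreover have "card (exceed_set (x \<circ> f) t) \<le> card (exceed_set x t)"
    using card_mono[OF fin sub] card_image[OF inj_on] by simp
  ultimately show "t \<in> xstar_levels (x \<circ> f) n" using t by (auto simp: xstar_levels_def)
qed

lemma xstar_add_le:
  assumes "x \<longlonglongrightarrow> 0" "y \<longlonglongrightarrow> 0"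
  shows "xstar (add_seq x y) (m + k) \<le> xstar x m + xstar y k"
proof (rule dense_ge)
  fix s assume s: "xstar x m + xstar y k < s"
  define e where "e = (s - xstar x m - xstar y k) / 2"
  define a b where "a = xstar x m + e" and "b = xstar y k + e"
  have "e > 0" and s_eq: "s = a + b" using s by (simp_all add: e_def a_def b_def)
  then have a: "a \<in> xstar_levels x m" and b: "b \<in> xstar_levels y k"
    unfolding a_def b_def by (auto intro: xstar_less_imp_level assms)
  have sub: "exceed_set (add_seq x y) s \<subseteq> exceed_set x a \<union> exceed_set y b"
    using abs_triangle_ineq[of "x _" "y _"] by (force simp: exceed_set_def add_seq_def s_eq)
  have fins: "finite (exceed_set x a)" "finite (exceed_set y b)"
    using a b by (auto simp: xstar_levels_def)
  have "card (exceed_set (add_seq x y) s) \<le> card (exceed_set x a \<union> exceed_set y b)"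
    using fins by (intro card_mono[OF _ sub]) blast
  also have "\<dots> \<le> card (exceed_set x a) + card (exceed_set y b)" by (rule card_Un_le)
  also have "\<dots> \<le> m + k" using a b by (auto simp: xstar_levels_def)
  finally have "s \<in> xstar_levels (add_seq x y) (m + k)"
    using finite_subset[OF sub] fins xstar_nonneg[OF assms(1), of m] xstar_nonneg[OF assms(2), of k] s
    unfolding xstar_levels_def by auto
  then show "xstar (add_seq x y) (m + k) \<le> s"
    unfolding xstar_eq_Inf_levels by (rule cInf_lower[OF _ bdd_below_xstar_levels])
qed

lemma sum_lessThan_mult_div: "(\<Sum>m<N * K. g (m div N)) = real N * (\<Sum>k<K. g k)"
proof (induction K)
  case (Suc K)
  have "(\<Sum>m<N * Suc K. g (m div N)) = (\<Sum>m<N * K. g (m div N)) + (\<Sum>m\<in>{N * K..<N * K + N}. g (m div N))"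
    by (simp add: algebra_simps sum.atLeastLessThan_concat[symmetric] atLeast0LessThan[symmetric])
  also have "(\<Sum>m\<in>{N * K..<N * K + N}. g (m div N)) = (\<Sum>m\<in>{N * K..<N * K + N}. g K)"
  proof (rule sum.cong)
    fix m assume "m \<in> {N * K..<N * K + N}"
    then have "m div N = K" by (simp add: div_nat_eqI mult.commute)
    then show "g (m div N) = g K" by simp
  qed simp
  finally show ?case using Suc by (simp add: algebra_simps)
qed simp

lemma summable_div_le:
  assumes "0 < N" "\<And>k. 0 \<le> g k" "summable g"
  shows "summable (\<lambda>m. g (m div N))" and "(\<Sum>m. g (m div N)) \<le> real N * (\<Sum>k. g k)"
proof -
  have bound: "(\<Sum>m<M. g (m div N)) \<le> real N * (\<Sum>k. g k)" for M
  proof -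
    have "(\<Sum>m<M. g (m div N)) \<le> (\<Sum>m<N * M. g (m div N))"
      using assms(1) by (intro sum_mono2) (auto simp: assms(2))
    also have "\<dots> = real N * (\<Sum>k<M. g k)" by (rule sum_lessThan_mult_div)
    also have "\<dots> \<le> real N * (\<Sum>k. g k)"
      by (intro mult_left_mono sum_le_suminf assms) auto
    finally show ?thesis .
  qed
  show sm: "summable (\<lambda>m. g (m div N))" by (rule summableI_nonneg_bounded[OF assms(2) bound])
  show "(\<Sum>m. g (m div N)) \<le> real N * (\<Sum>k. g k)" by (rule suminf_le_const[OF sm bound])
qed

lemma powr_add_le_two_powr:
  fixes a b p :: real
  assumes "0 \<le> a" "0 \<le> b" "0 \<le> p"
  shows "(a + b) powr p \<le> 2 powr p * (a powr p + b powr p)"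
proof -
  have "(a + b) powr p \<le> (2 * max a b) powr p"
    by (rule powr_mono2) (use assms in auto)
  also have "\<dots> = 2 powr p * max a b powr p" by (simp add: powr_mult)
  also have "max a b powr p \<le> a powr p + b powr p" by (simp add: max_def)
  finally show ?thesis by simp
qed

lemma powr_le_mult_powr:
  fixes a b c q :: real
  assumes "0 \<le> a" "0 \<le> b" "0 \<le> c" "0 \<le> q" "a \<le> c * b"
  shows "a powr q \<le> c powr q * b powr q"
  using powr_mono2[OF assms(4,1,5)] assms(2,3) by (simp add: powr_mult)

lemma weight_seq_nonneg: "weight_seq w \<Longrightarrow> 0 \<le> w n"
  unfolding weight_seq_def using decseq_ge by blast

lemma weight_seq_antimono: "weight_seq w \<Longrightarrow> m \<le> n \<Longrightarrow> w n \<le> w m"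
  unfolding weight_seq_def by (simp add: antimonoD)

definition lorentz_pow :: "(nat \<Rightarrow> real) \<Rightarrow> real \<Rightarrow> (nat \<Rightarrow> real) \<Rightarrow> real" where
  "lorentz_pow w p x = (\<Sum>n. w n * xstar x n powr p)"

lemma lorentz_norm_eq_lorentz_pow: "lorentz_norm w p x = lorentz_pow w p x powr (1 / p)"
  by (simp add: lorentz_norm_def lorentz_pow_def)

lemma lorentz_norm_nonneg: "0 \<le> lorentz_norm w p x"
  by (simp add: lorentz_norm_def)

lemma lorentz_pow_nonneg: "weight_seq w \<Longrightarrow> x \<in> lorentz_space w p \<Longrightarrow> 0 \<le> lorentz_pow w p x"
  unfolding lorentz_pow_def lorentz_space_def
  by (auto intro!: suminf_nonneg simp: weight_seq_nonneg)

lemma lorentz_norm_powr: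
  assumes "weight_seq w" "0 < p" "x \<in> lorentz_space w p"
  shows "lorentz_norm w p x powr p = lorentz_pow w p x"
  using lorentz_pow_nonneg[OF assms(1,3)] assms(2) by (simp add: lorentz_norm_eq_lorentz_pow powr_powr)

lemma zero_in_lorentz_space: "(\<lambda>k. 0) \<in> lorentz_space w p"
  and lorentz_pow_zero: "lorentz_pow w p (\<lambda>k. 0) = 0"
  unfolding lorentz_space_def lorentz_pow_def by (auto simp: xstar_zero)

lemma lorentz_space_add:
  assumes w: "weight_seq w" and p: "0 < p" and x: "x \<in> lorentz_space w p" and y: "y \<in> lorentz_space w p"
  shows "add_seq x y \<in> lorentz_space w p"
    and "lorentz_pow w p (add_seq x y) \<le> 2 * 2 powr p * (lorentz_pow w p x + lorentz_pow w p y)"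
proof -
  have x0: "x \<longlonglongrightarrow> 0" and y0: "y \<longlonglongrightarrow> 0"
    and sx: "summable (\<lambda>n. w n * xstar x n powr p)" and sy: "summable (\<lambda>n. w n * xstar y n powr p)"
    using x y by (auto simp: lorentz_space_def)
  have xy0: "add_seq x y \<longlonglongrightarrow> 0" unfolding add_seq_def using tendsto_add[OF x0 y0] by simp
  define g where "g k = 2 powr p * (w k * xstar x k powr p + w k * xstar y k powr p)" for k
  have g0: "0 \<le> g k" for k unfolding g_def using weight_seq_nonneg[OF w] by auto
  have gs: "summable g" unfolding g_def by (intro summable_mult summable_add sx sy)
  have "(\<Sum>k. g k) = 2 powr p * (lorentz_pow w p x + lorentz_pow w p y)"
    unfolding g_def lorentz_pow_def by (simp add: suminf_mult suminf_add[OF sx sy] sx sy summable_add)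
  have term_le: "w m * xstar (add_seq x y) m powr p \<le> g (m div 2)" for m
  proof -
    let ?a = "xstar x (m div 2)" and ?b = "xstar y (m div 2)"
    have "xstar (add_seq x y) m \<le> xstar (add_seq x y) (m div 2 + m div 2)"
      by (rule xstar_antimono[OF xy0]) simp
    also have "\<dots> \<le> ?a + ?b" by (rule xstar_add_le[OF x0 y0])
    finally have "xstar (add_seq x y) m powr p \<le> (?a + ?b) powr p"
      by (intro powr_mono2) (use xstar_nonneg[OF xy0] p in auto)
    also have "\<dots> \<le> 2 powr p * (?a powr p + ?b powr p)"
      by (rule powr_add_le_two_powr) (use xstar_nonneg x0 y0 p in auto)
    finally have "xstar (add_seq x y) m powr p \<le> 2 powr p * (?a powr p + ?b powr p)" .
    moreover have "w m \<le> w (m div 2)" "0 \<le> w m"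
      using weight_seq_antimono[OF w] weight_seq_nonneg[OF w] by auto
    ultimately have "w m * xstar (add_seq x y) m powr p \<le> w (m div 2) * (2 powr p * (?a powr p + ?b powr p))"
      by (intro mult_mono) auto
    then show ?thesis by (simp add: g_def algebra_simps)
  qed
  have term_nonneg: "0 \<le> w m * xstar (add_seq x y) m powr p" for m
    using weight_seq_nonneg[OF w] by simp
  have sf: "summable (\<lambda>m. w m * xstar (add_seq x y) m powr p)"
    by (rule summable_comparison_test'[OF summable_div_le(1)[OF _ g0 gs, of 2]])
      (use term_le term_nonneg in auto)
  then show "add_seq x y \<in> lorentz_space w p" using xy0 by (simp add: lorentz_space_def)
  have "lorentz_pow w p (add_seq x y) \<le> (\<Sum>m. g (m div 2))"
    unfolding lorentz_pow_def by (rule suminf_le[OF term_le sf summable_div_le(1)[OF _ g0 gs]]) auto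
  also have "\<dots> \<le> 2 * (\<Sum>k. g k)" using summable_div_le(2)[OF _ g0 gs, of 2] by simp
  finally show "lorentz_pow w p (add_seq x y) \<le> 2 * 2 powr p * (lorentz_pow w p x + lorentz_pow w p y)"
    using \<open>(\<Sum>k. g k) = _\<close> by simp
qed

lemma lorentz_space_sum:
  assumes w: "weight_seq w" and p: "0 < p" and v: "\<forall>i<n. v i \<in> lorentz_space w p"
  shows "(\<lambda>k. \<Sum>i<n. v i k) \<in> lorentz_space w p \<and>
         lorentz_pow w p (\<lambda>k. \<Sum>i<n. v i k) \<le> (2 * 2 powr p) ^ n * (\<Sum>i<n. lorentz_pow w p (v i))"
  using v
proof (induction n)
  case 0
  then show ?case using zero_in_lorentz_space lorentz_pow_zero by simp
next
  case (Suc n)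
  let ?S = "\<lambda>k. \<Sum>i<n. v i k" and ?c = "2 * 2 powr p :: real"
  have c1: "1 \<le> ?c" using p ge_one_powr_ge_zero[of 2 p] by simp
  have IH: "?S \<in> lorentz_space w p" "lorentz_pow w p ?S \<le> ?c ^ n * (\<Sum>i<n. lorentz_pow w p (v i))"
    using Suc by auto
  have vn: "v n \<in> lorentz_space w p" using Suc by auto
  have eq: "(\<lambda>k. \<Sum>i<Suc n. v i k) = add_seq ?S (v n)" by (simp add: add_seq_def)
  have "lorentz_pow w p (v n) \<le> ?c ^ n * lorentz_pow w p (v n)"
    using mult_right_mono[OF one_le_power[OF c1, of n] lorentz_pow_nonneg[OF w vn]] by simp
  then have "lorentz_pow w p (add_seq ?S (v n)) \<le> ?c * (?c ^ n * (\<Sum>i<n. lorentz_pow w p (v i)) + ?c ^ n * lorentz_pow w p (v n))"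
    using lorentz_space_add(2)[OF w p IH(1) vn] IH(2) c1 by (smt (verit) mult_left_mono)
  also have "\<dots> = ?c ^ Suc n * (\<Sum>i<Suc n. lorentz_pow w p (v i))" by (simp add: algebra_simps)
  finally show ?case using lorentz_space_add(1)[OF w p IH(1) vn] eq by simp
qed

lemma lorentz_space_subseq:
  assumes w: "weight_seq w" and p: "0 < p" and f: "strict_mono f" and x: "x \<in> lorentz_space w p"
  shows "x \<circ> f \<in> lorentz_space w p" and "lorentz_pow w p (x \<circ> f) \<le> lorentz_pow w p x"
proof -
  have x0: "x \<longlonglongrightarrow> 0" and sx: "summable (\<lambda>n. w n * xstar x n powr p)"
    using x by (auto simp: lorentz_space_def)
  have xf0: "(x \<circ> f) \<longlonglongrightarrow> 0" using LIMSEQ_subseq_LIMSEQ[OF x0 f] .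
  have term_le: "w n * xstar (x \<circ> f) n powr p \<le> w n * xstar x n powr p" for n
    using xstar_reindex_le[OF x0 strict_mono_imp_inj_on[OF f]] xstar_nonneg[OF xf0] p
      weight_seq_nonneg[OF w]
    by (intro mult_left_mono powr_mono2) auto
  have sf: "summable (\<lambda>n. w n * xstar (x \<circ> f) n powr p)"
    by (rule summable_comparison_test'[OF sx]) (use term_le weight_seq_nonneg[OF w] in auto)
  then show "x \<circ> f \<in> lorentz_space w p" using xf0 by (simp add: lorentz_space_def)
  show "lorentz_pow w p (x \<circ> f) \<le> lorentz_pow w p x"
    unfolding lorentz_pow_def by (rule suminf_le[OF term_le sf sx])
qed

lemma bounded_op_nonneg_const:
  assumes "bounded_op N1 X N2 Y T" "\<forall>x\<in>X. 0 \<le> N1 x"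
  obtains C where "0 \<le> C" "\<forall>x\<in>X. N2 (T x) \<le> C * N1 x"
proof -
  obtain C where C: "\<forall>x\<in>X. N2 (T x) \<le> C * N1 x" using assms(1) by (auto simp: bounded_op_def)
  have "\<forall>x\<in>X. N2 (T x) \<le> max C 0 * N1 x"
    using C assms(2) by (smt (verit) mult_right_mono max.cobounded1)
  then show ?thesis using that[of "max C 0"] by simp
qed

lemma bounded_op_compose:
  assumes T: "bounded_op N1 X N2 Y T" and S: "bounded_op N2 Y N3 Z S" and "\<forall>y\<in>Y. 0 \<le> N2 y"
  shows "bounded_op N1 X N3 Z (\<lambda>x. S (T x))"
proof -
  have TY: "\<And>x. x \<in> X \<Longrightarrow> T x \<in> Y" using T by (simp add: bounded_op_def)
  obtain CS where CS: "0 \<le> CS" "\<forall>y\<in>Y. N3 (S y) \<le> CS * N2 y"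
    using bounded_op_nonneg_const[OF S assms(3)] .
  obtain CT where CT: "\<forall>x\<in>X. N2 (T x) \<le> CT * N1 x" using T by (auto simp: bounded_op_def)
  have "N3 (S (T x)) \<le> (CS * CT) * N1 x" if "x \<in> X" for x
    using CS CT TY[OF that] that by (smt (verit) mult.assoc mult_left_mono)
  moreover have "linear_on X (\<lambda>x. S (T x))"
    using T S TY by (auto simp: bounded_op_def linear_on_def)
  ultimately show ?thesis using S TY by (auto simp: bounded_op_def)
qed

lemma bounded_op_into_subset:
  "bounded_op N1 X N2 Y T \<Longrightarrow> \<forall>x\<in>X. T x \<in> Y' \<Longrightarrow> bounded_op N1 X N2 Y' T"
  by (simp add: bounded_op_def)

lemma bounded_op_inv_into:
  assumes U: "linear_on Y U" and bij: "bij_betw U Y Z" and Y: "linear_subspace Y"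
    and lower: "\<exists>C. \<forall>y\<in>Y. N1 y \<le> C * N2 (U y)"
  shows "bounded_op N2 Z N1 Y (inv_into Y U)"
proof -
  let ?V = "inv_into Y U"
  have VZ: "z \<in> Z \<Longrightarrow> ?V z \<in> Y" and UV: "z \<in> Z \<Longrightarrow> U (?V z) = z" for z
    using bij by (auto simp: bij_betw_def intro: inv_into_into f_inv_into_f)
  have VU: "y \<in> Y \<Longrightarrow> ?V (U y) = y" for y
    using bij by (simp add: bij_betw_def inv_into_f_f)
  have "?V (add_seq a b) = add_seq (?V a) (?V b)" if "a \<in> Z" "b \<in> Z" for a b
  proof -
    have "add_seq a b = U (add_seq (?V a) (?V b))" using U that VZ UV by (simp add: linear_on_def)
    then show ?thesis using VU Y VZ that by (simp add: linear_subspace_def)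
  qed
  moreover have "?V (scale_seq c a) = scale_seq c (?V a)" if "a \<in> Z" for a c
  proof -
    have "scale_seq c a = U (scale_seq c (?V a))" using U that VZ UV by (simp add: linear_on_def)
    then show ?thesis using VU Y VZ that by (simp add: linear_subspace_def)
  qed
  moreover have "\<exists>C. \<forall>z\<in>Z. N1 (?V z) \<le> C * N2 z" using lower VZ UV by metis
  ultimately show ?thesis using VZ by (simp add: bounded_op_def linear_on_def)
qed

lemma bounded_op_zero:
  assumes "(\<lambda>k. 0) \<in> Y" "N2 (\<lambda>k. 0) \<le> 0"
  shows "bounded_op N1 X N2 Y (\<lambda>x k. 0)"
  using assms by (auto simp: bounded_op_def linear_on_def add_seq_def scale_seq_def intro!: exI[of _ 0])

lemma bounded_ops_nonneg_consts:
  assumes "\<forall>i<n. bounded_op N1 X N2 Y (T i)" "\<forall>x\<in>X. 0 \<le> N1 x"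
  obtains C where "\<And>i. i < n \<Longrightarrow> 0 \<le> C i \<and> (\<forall>x\<in>X. N2 (T i x) \<le> C i * N1 x)"
proof -
  have "\<forall>i. \<exists>C. i < n \<longrightarrow> 0 \<le> C \<and> (\<forall>x\<in>X. N2 (T i x) \<le> C * N1 x)"
    using assms bounded_op_nonneg_const by metis
  then show ?thesis using that by metis
qed

lemma lp_norm_nonneg: "0 \<le> lp_norm p x"
  by (simp add: lp_norm_def)

lemma lp_norm_powr:
  assumes "0 < p" "x \<in> lp_space p"
  shows "lp_norm p x powr p = (\<Sum>k. \<bar>x k\<bar> powr p)"
  using assms suminf_nonneg[of "\<lambda>k. \<bar>x k\<bar> powr p"]
  by (simp add: lp_norm_def lp_space_def powr_powr)

definition interleave :: "nat \<Rightarrow> (nat \<Rightarrow> 'a \<Rightarrow> nat \<Rightarrow> real) \<Rightarrow> 'a \<Rightarrow> nat \<Rightarrow> real" where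
  "interleave N u x = (\<lambda>m. u (m mod N) x (m div N))"

definition slice :: "nat \<Rightarrow> nat \<Rightarrow> (nat \<Rightarrow> real) \<Rightarrow> nat \<Rightarrow> real" where
  "slice N i z = (\<lambda>j. z (N * j + i))"

lemma slice_interleave: "i < N \<Longrightarrow> slice N i (interleave N u x) = u i x"
  by (simp add: slice_def interleave_def)

lemma slice_add: "slice N i (add_seq x y) = add_seq (slice N i x) (slice N i y)"
  and slice_scale: "slice N i (scale_seq c x) = scale_seq c (slice N i x)"
  by (simp_all add: slice_def add_seq_def scale_seq_def)

lemma lorentz_space_slice:
  assumes "weight_seq w" "0 < p" "0 < N" "x \<in> lorentz_space w p"
  shows "slice N i x \<in> lorentz_space w p" and "lorentz_pow w p (slice N i x) \<le> lorentz_pow w p x"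
proof -
  have "slice N i x = x \<circ> (\<lambda>j. N * j + i)" by (simp add: slice_def o_def)
  moreover have "strict_mono (\<lambda>j. N * j + i)" using assms(3) by (auto simp: strict_mono_def)
  ultimately show "slice N i x \<in> lorentz_space w p" "lorentz_pow w p (slice N i x) \<le> lorentz_pow w p x"
    using lorentz_space_subseq[OF assms(1,2) _ assms(4)] by auto
qed

lemma bounded_op_interleave:
  assumes p: "0 < p" and N: "0 < N" and N1: "\<forall>x\<in>X. 0 \<le> N1 x"
    and u: "\<forall>i<N. bounded_op N1 X (lp_norm p) (lp_space p) (u i)"
  shows "bounded_op N1 X (lp_norm p) (lp_space p) (interleave N u)"
proof -
  have u_lp: "i < N \<Longrightarrow> x \<in> X \<Longrightarrow> u i x \<in> lp_space p" for i x
    using u by (auto simp: bounded_op_def)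
  obtain C where C: "\<And>i. i < N \<Longrightarrow> 0 \<le> C i \<and> (\<forall>x\<in>X. lp_norm p (u i x) \<le> C i * N1 x)"
    using bounded_ops_nonneg_consts[OF u N1] by blast
  define G where "G x k = (\<Sum>i<N. \<bar>u i x k\<bar> powr p)" for x k
  have G0: "0 \<le> G x k" for x k unfolding G_def by (intro sum_nonneg) auto
  have Gs: "x \<in> X \<Longrightarrow> summable (G x)" for x
    unfolding G_def using u_lp by (intro summable_sum) (auto simp: lp_space_def)
  have term_le: "\<bar>interleave N u x m\<bar> powr p \<le> G x (m div N)" for x m
    unfolding G_def interleave_def using N
    by (intro member_le_sum[where f = "\<lambda>i. \<bar>u i x (m div N)\<bar> powr p"]) auto
  have sm: "x \<in> X \<Longrightarrow> summable (\<lambda>m. \<bar>interleave N u x m\<bar> powr p)" for x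
    by (rule summable_comparison_test'[OF summable_div_le(1)[OF N G0 Gs]]) (use term_le in auto)
  define K where "K = real N * (\<Sum>i<N. C i powr p)"
  have K0: "0 \<le> K" unfolding K_def by (intro mult_nonneg_nonneg sum_nonneg) auto
  have "lp_norm p (interleave N u x) \<le> K powr (1 / p) * N1 x" if x: "x \<in> X" for x
  proof -
    have each: "(\<Sum>k. \<bar>u i x k\<bar> powr p) \<le> C i powr p * N1 x powr p" if i: "i < N" for i
    proof -
      have "lp_norm p (u i x) powr p \<le> C i powr p * N1 x powr p"
        using C[OF i] x N1 p by (intro powr_le_mult_powr) (auto simp: lp_norm_nonneg)
      then show ?thesis using lp_norm_powr[OF p u_lp[OF i x]] by simp
    qed
    have "(\<Sum>m. \<bar>interleave N u x m\<bar> powr p) \<le> (\<Sum>m. G x (m div N))"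
      by (rule suminf_le[OF term_le sm[OF x] summable_div_le(1)[OF N G0 Gs[OF x]]])
    also have "\<dots> \<le> real N * (\<Sum>k. G x k)" by (rule summable_div_le(2)[OF N G0 Gs[OF x]])
    also have "(\<Sum>k. G x k) = (\<Sum>i<N. \<Sum>k. \<bar>u i x k\<bar> powr p)"
      unfolding G_def using u_lp x by (intro suminf_sum) (auto simp: lp_space_def)
    also have "real N * \<dots> \<le> K * N1 x powr p"
      unfolding K_def sum_distrib_right mult.assoc by (intro mult_left_mono sum_mono each) auto
    finally have "(\<Sum>m. \<bar>interleave N u x m\<bar> powr p) \<le> K * N1 x powr p" .
    from powr_le_mult_powr[OF suminf_nonneg[OF sm[OF x]] _ K0 _ this, of "1 / p"]
    show ?thesis using p N1 x by (simp add: lp_norm_def powr_powr)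
  qed
  moreover have "linear_on X (interleave N u)"
    using u N by (auto simp: bounded_op_def linear_on_def interleave_def add_seq_def scale_seq_def)
  ultimately show ?thesis using sm by (auto simp: bounded_op_def lp_space_def)
qed

lemma Ld_sum_slices:
  assumes w: "weight_seq w" and p: "0 < p" and N: "0 < N" and A: "\<forall>i<N. Ld w p (A i)"
  shows "Ld w p (\<lambda>z k. \<Sum>i<N. A i (slice N i z) k)"
proof -
  let ?LS = "lorentz_space w p" and ?Av = "\<lambda>z k. \<Sum>i<N. A i (slice N i z) k"
  note slice = lorentz_space_slice[OF w p N]
  have A_LS: "i < N \<Longrightarrow> z \<in> ?LS \<Longrightarrow> A i z \<in> ?LS" for i z
    using A by (auto simp: Ld_def bounded_op_def)
  have A_lin: "i < N \<Longrightarrow> linear_on ?LS (A i)" for i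
    using A by (auto simp: Ld_def bounded_op_def)
  have terms_LS: "z \<in> ?LS \<Longrightarrow> \<forall>i<N. A i (slice N i z) \<in> ?LS" for z
    using slice(1) A_LS by blast
  note sum_LS = lorentz_space_sum[OF w p terms_LS]
  have "linear_on ?LS ?Av"
    unfolding linear_on_def
  proof (intro conjI ballI allI)
    fix x y assume x: "x \<in> ?LS" and y: "y \<in> ?LS"
    have "A i (slice N i (add_seq x y)) = add_seq (A i (slice N i x)) (A i (slice N i y))" if "i < N" for i
      using A_lin[OF that] slice(1)[OF x] slice(1)[OF y] by (simp add: slice_add linear_on_def)
    then show "?Av (add_seq x y) = add_seq (?Av x) (?Av y)" by (simp add: add_seq_def sum.distrib)
  next
    fix c x assume x: "x \<in> ?LS"
    have "A i (slice N i (scale_seq c x)) = scale_seq c (A i (slice N i x))" if "i < N" for i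
      using A_lin[OF that] slice(1)[OF x] by (simp add: slice_scale linear_on_def)
    then show "?Av (scale_seq c x) = scale_seq c (?Av x)" by (simp add: scale_seq_def sum_distrib_left)
  qed
  moreover obtain C where C: "\<And>i. i < N \<Longrightarrow> 0 \<le> C i \<and>
      (\<forall>z\<in>?LS. lorentz_norm w p (A i z) \<le> C i * lorentz_norm w p z)"
    using bounded_ops_nonneg_consts[of N _ ?LS] A lorentz_norm_nonneg unfolding Ld_def by blast
  define K where "K = (2 * 2 powr p) ^ N * (\<Sum>i<N. C i powr p)"
  have K0: "0 \<le> K" unfolding K_def by (intro mult_nonneg_nonneg sum_nonneg) auto
  have "lorentz_norm w p (?Av z) \<le> K powr (1 / p) * lorentz_norm w p z" if z: "z \<in> ?LS" for z
  proof -
    have each: "lorentz_pow w p (A i (slice N i z)) \<le> C i powr p * lorentz_pow w p z" if i: "i < N" for i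
    proof -
      have "lorentz_norm w p (A i (slice N i z)) powr p \<le> C i powr p * lorentz_norm w p (slice N i z) powr p"
        using C[OF i] slice(1)[OF z] p by (intro powr_le_mult_powr) (auto simp: lorentz_norm_nonneg)
      also have "\<dots> \<le> C i powr p * lorentz_pow w p z"
        using slice[OF z] lorentz_norm_powr[OF w p] by (simp add: mult_left_mono)
      finally show ?thesis using lorentz_norm_powr[OF w p A_LS[OF i slice(1)[OF z]]] by simp
    qed
    have "lorentz_pow w p (?Av z) \<le> (2 * 2 powr p) ^ N * (\<Sum>i<N. lorentz_pow w p (A i (slice N i z)))"
      using sum_LS z by blast
    also have "\<dots> \<le> K * lorentz_pow w p z"
      unfolding K_def sum_distrib_right mult.assoc by (intro mult_left_mono sum_mono each) auto
    finally have "lorentz_pow w p (?Av z) powr (1 / p) \<le> K powr (1 / p) * lorentz_pow w p z powr (1 / p)"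
      using sum_LS z p by (intro powr_le_mult_powr K0 lorentz_pow_nonneg[OF w]) auto
    then show ?thesis by (simp add: lorentz_norm_eq_lorentz_pow)
  qed
  ultimately show ?thesis using sum_LS by (auto simp: Ld_def bounded_op_def)
qed

lemma in_JT_imp_in_Jj:
  assumes w: "weight_seq w" and p: "0 < p"
    and T: "bounded_op (lorentz_norm w p) (lorentz_space w p) (lp_norm p) (lp_space p) T"
    and "in_JT w p T S"
  shows "in_Jj w p S"
proof -
  let ?LS = "lorentz_space w p"
  obtain n :: nat and A B where AB: "\<forall>i<n. Ld w p (A i) \<and> Ld w p (B i)"
    and S: "\<forall>x\<in>?LS. S x = (\<lambda>k. \<Sum>i<n. A i (T (B i x)) k)"
    using assms(4) unfolding in_JT_def by blast
  show ?thesis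
  proof (cases "n = 0")
    case True
    have "Ld w p (\<lambda>z k. 0)"
      unfolding Ld_def using zero_in_lorentz_space
      by (intro bounded_op_zero) (auto simp: lorentz_norm_eq_lorentz_pow lorentz_pow_zero)
    moreover have "bounded_op (lorentz_norm w p) ?LS (lp_norm p) (lp_space p) (\<lambda>x k. 0)"
      by (intro bounded_op_zero) (auto simp: lp_space_def lp_norm_def)
    ultimately show ?thesis
      using S True unfolding in_Jj_def by (intro exI[of _ "\<lambda>z k. 0"] exI[of _ "\<lambda>x k. 0"]) simp
  next
    case False
    let ?u = "\<lambda>i x. T (B i x)"
    have "\<forall>i<n. bounded_op (lorentz_norm w p) ?LS (lp_norm p) (lp_space p) (?u i)"
      using AB bounded_op_compose[OF _ T] lorentz_norm_nonneg unfolding Ld_def by blast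
    then have "bounded_op (lorentz_norm w p) ?LS (lp_norm p) (lp_space p) (interleave n ?u)"
      using False by (intro bounded_op_interleave[OF p]) (auto simp: lorentz_norm_nonneg)
    moreover have "Ld w p (\<lambda>z k. \<Sum>i<n. A i (slice n i z) k)"
      using False AB by (intro Ld_sum_slices[OF w p]) auto
    ultimately show ?thesis
      using S unfolding in_Jj_def
      by (intro exI[of _ "\<lambda>z k. \<Sum>i<n. A i (slice n i z) k"] exI[of _ "interleave n ?u"])
        (simp add: slice_interleave)
  qed
qed

lemma in_Jj_imp_in_JT:
  assumes YL: "Y \<subseteq> lorentz_space w p" and Y: "linear_subspace Y" and P: "\<forall>y\<in>Y. P y = y"
    and U: "linear_on Y U" "bij_betw U Y (lp_space p)"
      "\<exists>C. \<forall>y\<in>Y. lorentz_norm w p y \<le> C * lp_norm p (U y)"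
    and "in_Jj w p S"
  shows "in_JT w p (\<lambda>x. U (P x)) S"
proof -
  let ?LS = "lorentz_space w p" and ?V = "inv_into Y U"
  obtain A B where A: "Ld w p A" and B: "bounded_op (lorentz_norm w p) ?LS (lp_norm p) (lp_space p) B"
    and S: "\<forall>x\<in>?LS. S x = A (B x)"
    using assms(7) unfolding in_Jj_def by blast
  have VB: "bounded_op (lorentz_norm w p) ?LS (lorentz_norm w p) Y (\<lambda>x. ?V (B x))"
    by (rule bounded_op_compose[OF B bounded_op_inv_into[OF U(1,2) Y U(3)]]) (simp add: lp_norm_nonneg)
  have B_lp: "x \<in> ?LS \<Longrightarrow> B x \<in> lp_space p" for x using B by (simp add: bounded_op_def)
  have V_Y: "x \<in> ?LS \<Longrightarrow> ?V (B x) \<in> Y" for x using VB by (simp add: bounded_op_def)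
  have "Ld w p (\<lambda>x. ?V (B x))"
    unfolding Ld_def using V_Y YL by (intro bounded_op_into_subset[OF VB]) auto
  moreover have "U (P (?V (B x))) = B x" if "x \<in> ?LS" for x
    using P V_Y[OF that] f_inv_into_f[of "B x" U Y] B_lp[OF that] bij_betw_imp_surj_on[OF U(2)] by simp
  ultimately show ?thesis
    using A S unfolding in_JT_def
    by (intro exI[of _ 1] exI[of _ "\<lambda>_. A"] exI[of _ "\<lambda>_ x. ?V (B x)"]) simp
qed

theorem proposition4p2:
  fixes w :: "nat \<Rightarrow> real" and p :: real
    and Y :: "(nat \<Rightarrow> real) set"
    and P U :: "(nat \<Rightarrow> real) \<Rightarrow> (nat \<Rightarrow> real)"
  assumes "1 \<le> p"
    and "weight_seq w"
    and "Y \<subseteq> lorentz_space w p" and "linear_subspace Y"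
    and "closed_in_norm (lorentz_norm w p) (lorentz_space w p) Y"
    and "Ld w p P" and "P ` lorentz_space w p = Y" and "\<forall>y\<in>Y. P y = y"
    and "bounded_op (lorentz_norm w p) Y (lp_norm p) (lp_space p) U"
    and "bij_betw U Y (lp_space p)"
    and "\<exists>C. \<forall>y\<in>Y. lorentz_norm w p y \<le> C * lp_norm p (U y)"
  shows "\<forall>S. in_JT w p (\<lambda>x. U (P x)) S \<longleftrightarrow> in_Jj w p S"
proof -
  have p: "0 < p" using assms(1) by simp
  have "bounded_op (lorentz_norm w p) (lorentz_space w p) (lorentz_norm w p) Y P"
    using assms(7) by (intro bounded_op_into_subset[OF assms(6)[unfolded Ld_def]]) blast
  then have T: "bounded_op (lorentz_norm w p) (lorentz_space w p) (lp_norm p) (lp_space p) (\<lambda>x. U (P x))"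
    by (rule bounded_op_compose[OF _ assms(9)]) (simp add: lorentz_norm_nonneg)
  have U_lin: "linear_on Y U" using assms(9) by (simp add: bounded_op_def)
  show ?thesis
    using in_JT_imp_in_Jj[OF assms(2) p T] in_Jj_imp_in_JT[OF assms(3,4,8) U_lin assms(10,11)] by auto
qed

end
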